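(* Let $F$ be a set-system (not assumed uniform). The following are equivalent: (1) $F$ is an HKE set-system; (2) for every two non-empty disjoint subfamilies $\Gamma_1,\Gamma_2\subseteq F$, $$\Big|\bigcap\Gamma_1-\bigcup\Gamma_2\Big|=\Big|\bigcap\Gamma_2-\bigcup\Gamma_1\Big|;$$ (3) the equality in (2) holds for every two non-empty disjoint subfamilies $\Gamma_1,\Gamma_2\subseteq F$ with $\Gamma_1\cup\Gamma_2=F$.
   Context: A set-system is a family of sets; throughout, set-systems are non-empty finite families of finite non-empty sets. A set-system $F$ is a hereditary König–Egerváry (HKE) set-system if there is a positive integer $\alpha$ such that $|\bigcup\Gamma|+|\bigcap\Gamma|=2\alpha$ for every non-empty subfamily $\Gamma\subseteq F$. $X-Y$ denotes set difference. *)

theory Defs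
  imports Main
begin

definition set_system :: "'a set set \<Rightarrow> bool" where
  "set_system F \<longleftrightarrow> F \<noteq> {} \<and> finite F \<and> (\<forall>S\<in>F. finite S \<and> S \<noteq> {})"

definition HKE :: "'a set set \<Rightarrow> bool" where
  "HKE F \<longleftrightarrow> (\<exists>\<alpha>::nat. \<alpha> > 0 \<and>
     (\<forall>\<Gamma>. \<Gamma> \<noteq> {} \<and> \<Gamma> \<subseteq> F \<longrightarrow> card (\<Union>\<Gamma>) + card (\<Inter>\<Gamma>) = 2 * \<alpha>))"

end

theory Submission
  imports Defs
begin

text \<open>Classify each point x of \<open>\<Union>F\<close> by its trace, the subfamily of members containing x, and
  let n(T) be the number of points with trace T. Every set \<open>\<Inter>\<Gamma>\<^sub>1 - \<Union>\<Gamma>\<^sub>2\<close> is the union of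
  the classes with \<open>\<Gamma>\<^sub>1 \<subseteq> T\<close> and \<open>T \<inter> \<Gamma>\<^sub>2 = {}\<close>, and for a partition \<open>F = T \<union> (F - T)\<close> it is
  exactly the class of T. So (3) says n(T) = n(F - T) for all non-empty proper T, and
  summing this over the complementation bijection gives (2). Writing
  \<open>\<bar>\<Union>\<Gamma>\<bar> = \<bar>\<Union>F\<bar> - \<bar>\<Union>F - \<Union>\<Gamma>\<bar>\<close>, the HKE condition says that the sums of n(T) and of
  n(F - T) over all \<open>T \<supseteq> \<Gamma>\<close> agree for every non-empty \<open>\<Gamma>\<close> (up to the term T = F), and
  M\<ouml>bius inversion on the interval [\<open>\<Gamma>\<close>, F] turns this into n(T) = n(F - T).\<close>

definition trace :: "'a set set \<Rightarrow> 'a \<Rightarrow> 'a set set" where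
  "trace F x = {S\<in>F. x \<in> S}"

definition trace_count :: "'a set set \<Rightarrow> 'a set set \<Rightarrow> nat" where
  "trace_count F T = card {x\<in>\<Union>F. trace F x = T}"

lemma finite_subfamilies: "finite F \<Longrightarrow> finite {T. T \<subseteq> F \<and> P T}"
  by (auto intro: rev_finite_subset[of "Pow F"])

lemma card_trace_filter:
  assumes "finite F" "\<forall>S\<in>F. finite S"
  shows "card {x\<in>\<Union>F. P (trace F x)} = (\<Sum>T | T \<subseteq> F \<and> P T. trace_count F T)"
proof -
  have "{x\<in>\<Union>F. P (trace F x)} = (\<Union>T\<in>{T. T \<subseteq> F \<and> P T}. {x\<in>\<Union>F. trace F x = T})"
    by (auto simp: trace_def)
  also have "card \<dots> = (\<Sum>T | T \<subseteq> F \<and> P T. card {x\<in>\<Union>F. trace F x = T})"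
    by (rule card_UN_disjoint) (use assms finite_subfamilies in auto)
  finally show ?thesis by (simp add: trace_count_def)
qed

lemma trace_count_empty:
  assumes "\<forall>S\<in>F. S \<noteq> {}"
  shows "trace_count F {} = 0"
proof -
  have "{x\<in>\<Union>F. trace F x = {}} = {}"
    by (auto simp: trace_def)
  thus ?thesis unfolding trace_count_def by (metis card.empty)
qed

lemma Inter_diff_Union_eq_traces:
  assumes "\<Gamma>1 \<noteq> {}" "\<Gamma>1 \<subseteq> F" "\<Gamma>2 \<subseteq> F"
  shows "\<Inter>\<Gamma>1 - \<Union>\<Gamma>2 = {x\<in>\<Union>F. \<Gamma>1 \<subseteq> trace F x \<and> trace F x \<inter> \<Gamma>2 = {}}"
  using assms by (auto simp: trace_def)

lemma card_Inter_diff_Union: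
  assumes "finite F" "\<forall>S\<in>F. finite S" "\<Gamma>1 \<noteq> {}" "\<Gamma>1 \<subseteq> F" "\<Gamma>2 \<subseteq> F"
  shows "card (\<Inter>\<Gamma>1 - \<Union>\<Gamma>2) = (\<Sum>T | T \<subseteq> F \<and> \<Gamma>1 \<subseteq> T \<and> T \<inter> \<Gamma>2 = {}. trace_count F T)"
  unfolding Inter_diff_Union_eq_traces[OF assms(3-5)] by (rule card_trace_filter[OF assms(1,2)])

lemma card_Union_diff_Union:
  assumes "finite F" "\<forall>S\<in>F. finite S" "\<Gamma> \<subseteq> F"
  shows "card (\<Union>F - \<Union>\<Gamma>) = (\<Sum>T | T \<subseteq> F \<and> T \<inter> \<Gamma> = {}. trace_count F T)"
proof -
  have "\<Union>F - \<Union>\<Gamma> = {x\<in>\<Union>F. trace F x \<inter> \<Gamma> = {}}"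
    using assms(3) by (auto simp: trace_def)
  thus ?thesis unfolding card_trace_filter[OF assms(1,2), symmetric] by simp
qed

lemma sum_subfamilies_complement:
  assumes "finite F" "A \<subseteq> F" "B \<subseteq> F"
  shows "(\<Sum>T | T \<subseteq> F \<and> A \<subseteq> T \<and> T \<inter> B = {}. g (F - T))
       = (\<Sum>T | T \<subseteq> F \<and> B \<subseteq> T \<and> T \<inter> A = {}. g T)"
  by (rule sum.reindex_bij_witness[where i="\<lambda>T. F - T" and j="\<lambda>T. F - T"]) (use assms in auto)

lemma sum_supersets_eq_imp_eq:
  fixes a b :: "'b set \<Rightarrow> 'c::cancel_comm_monoid_add"
  assumes "finite F"
    and sums_eq: "\<And>G. G \<noteq> {} \<Longrightarrow> G \<subseteq> F \<Longrightarrow>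
           (\<Sum>T | T \<subseteq> F \<and> G \<subseteq> T. a T) = (\<Sum>T | T \<subseteq> F \<and> G \<subseteq> T. b T)"
  shows "G \<noteq> {} \<Longrightarrow> G \<subseteq> F \<Longrightarrow> a G = b G"
proof (induction "card (F - G)" arbitrary: G rule: less_induct)
  case less
  let ?S = "{T. T \<subseteq> F \<and> G \<subseteq> T \<and> T \<noteq> G}"
  have "{T. T \<subseteq> F \<and> G \<subseteq> T} = insert G ?S"
    using less.prems by auto
  moreover have "finite ?S"
    using finite_subfamilies[OF assms(1)] by simp
  ultimately have "a G + (\<Sum>T\<in>?S. a T) = b G + (\<Sum>T\<in>?S. b T)"
    using sums_eq[OF less.prems] by simp
  moreover have "(\<Sum>T\<in>?S. a T) = (\<Sum>T\<in>?S. b T)"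
  proof (rule sum.cong[OF refl])
    fix T assume T: "T \<in> ?S"
    hence "card (F - T) < card (F - G)"
      using assms(1) by (intro psubset_card_mono) auto
    thus "a T = b T" using less.hyps T less.prems by auto
  qed
  ultimately show ?case by simp
qed

lemma HKE_iff_card_Union_Inter_const:
  assumes "set_system F"
  shows "HKE F \<longleftrightarrow> (\<forall>\<Gamma>. \<Gamma> \<noteq> {} \<and> \<Gamma> \<subseteq> F \<longrightarrow>
           card (\<Union>\<Gamma>) + card (\<Inter>\<Gamma>) = card (\<Union>F) + card (\<Inter>F))"
    (is "_ \<longleftrightarrow> (\<forall>\<Gamma>. ?P \<Gamma> \<longrightarrow> ?c \<Gamma> = ?c F)")
proof
  assume "HKE F"
  then obtain \<alpha> where "\<forall>\<Gamma>. ?P \<Gamma> \<longrightarrow> ?c \<Gamma> = 2 * \<alpha>"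
    unfolding HKE_def by blast
  moreover have "?P F" using assms by (simp add: set_system_def)
  ultimately show "\<forall>\<Gamma>. ?P \<Gamma> \<longrightarrow> ?c \<Gamma> = ?c F" by metis
next
  assume const: "\<forall>\<Gamma>. ?P \<Gamma> \<longrightarrow> ?c \<Gamma> = ?c F"
  obtain S where S: "S \<in> F" "finite S" "S \<noteq> {}"
    using assms by (auto simp: set_system_def)
  have "?c F = 2 * card S"
    using const[rule_format, of "{S}"] S by simp
  with const S show "HKE F"
    unfolding HKE_def by (intro exI[of _ "card S"]) auto
qed

text \<open>At T = F the mirror image \<open>trace_count F {}\<close> vanishes; putting \<open>trace_count F F\<close> there
  instead accounts for the constant \<open>card (\<Inter>F)\<close>.\<close>

definition mirrored_trace_count :: "'a set set \<Rightarrow> 'a set set \<Rightarrow> nat" where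
  "mirrored_trace_count F T = (if T = F then trace_count F F else trace_count F (F - T))"

lemma card_Union_Inter_eq_iff_sums_eq:
  assumes "set_system F" "\<Gamma> \<noteq> {}" "\<Gamma> \<subseteq> F"
  shows "card (\<Union>\<Gamma>) + card (\<Inter>\<Gamma>) = card (\<Union>F) + card (\<Inter>F) \<longleftrightarrow>
     (\<Sum>T | T \<subseteq> F \<and> \<Gamma> \<subseteq> T. trace_count F T) = (\<Sum>T | T \<subseteq> F \<and> \<Gamma> \<subseteq> T. mirrored_trace_count F T)"
proof -
  have fin: "finite F" "\<forall>S\<in>F. finite S" and ne: "F \<noteq> {}" "\<forall>S\<in>F. S \<noteq> {}"
    using assms(1) by (auto simp: set_system_def)
  let ?U = "{T. T \<subseteq> F \<and> \<Gamma> \<subseteq> T}"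
  have "\<Union>\<Gamma> \<subseteq> \<Union>F" "finite (\<Union>F)"
    using fin assms(3) by auto
  hence "card (\<Union>F) = card (\<Union>\<Gamma>) + card (\<Union>F - \<Union>\<Gamma>)"
    by (simp add: card_Diff_subset card_mono finite_subset)
  moreover have "card (\<Union>F - \<Union>\<Gamma>) = (\<Sum>T\<in>?U. trace_count F (F - T))"
    using card_Union_diff_Union[OF fin assms(3)]
      sum_subfamilies_complement[OF fin(1) assms(3) empty_subsetI, of "trace_count F"]
    by simp
  moreover have "card (\<Inter>\<Gamma>) = (\<Sum>T\<in>?U. trace_count F T)"
    using card_Inter_diff_Union[OF fin assms(2,3) empty_subsetI] by simp
  moreover have "card (\<Inter>F) = trace_count F F"
  proof -
    have "{T. T \<subseteq> F \<and> F \<subseteq> T} = {F}" by auto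
    thus ?thesis using card_Inter_diff_Union[OF fin ne(1) order_refl empty_subsetI] by simp
  qed
  moreover have "(\<Sum>T\<in>?U. mirrored_trace_count F T) = trace_count F F + (\<Sum>T\<in>?U. trace_count F (F - T))"
  proof -
    have F: "F \<in> ?U" and finU: "finite ?U"
      using assms(3) finite_subfamilies[OF fin(1)] by auto
    have "(\<Sum>T\<in>?U - {F}. mirrored_trace_count F T) = (\<Sum>T\<in>?U - {F}. trace_count F (F - T))"
      by (rule sum.cong) (auto simp: mirrored_trace_count_def)
    thus ?thesis
      using sum.remove[OF finU F, of "mirrored_trace_count F"]
        sum.remove[OF finU F, of "\<lambda>T. trace_count F (F - T)"] trace_count_empty[OF ne(2)]
      by (simp add: mirrored_trace_count_def)
  qed
  ultimately show ?thesis by linarith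
qed

lemma HKE_iff_trace_count_complement:
  assumes "set_system F"
  shows "HKE F \<longleftrightarrow> (\<forall>T. T \<noteq> {} \<and> T \<subseteq> F \<and> T \<noteq> F \<longrightarrow> trace_count F T = trace_count F (F - T))"
proof -
  have "HKE F \<longleftrightarrow> (\<forall>\<Gamma>. \<Gamma> \<noteq> {} \<and> \<Gamma> \<subseteq> F \<longrightarrow>
     (\<Sum>T | T \<subseteq> F \<and> \<Gamma> \<subseteq> T. trace_count F T) = (\<Sum>T | T \<subseteq> F \<and> \<Gamma> \<subseteq> T. mirrored_trace_count F T))"
    using HKE_iff_card_Union_Inter_const[OF assms] card_Union_Inter_eq_iff_sums_eq[OF assms]
    by blast
  also have "\<dots> \<longleftrightarrow> (\<forall>T. T \<noteq> {} \<and> T \<subseteq> F \<longrightarrow> trace_count F T = mirrored_trace_count F T)"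
  proof
    assume "\<forall>\<Gamma>. \<Gamma> \<noteq> {} \<and> \<Gamma> \<subseteq> F \<longrightarrow>
     (\<Sum>T | T \<subseteq> F \<and> \<Gamma> \<subseteq> T. trace_count F T) = (\<Sum>T | T \<subseteq> F \<and> \<Gamma> \<subseteq> T. mirrored_trace_count F T)"
    with assms show "\<forall>T. T \<noteq> {} \<and> T \<subseteq> F \<longrightarrow> trace_count F T = mirrored_trace_count F T"
      using sum_supersets_eq_imp_eq[of F "trace_count F" "mirrored_trace_count F"]
      by (auto simp: set_system_def)
  next
    assume pointwise: "\<forall>T. T \<noteq> {} \<and> T \<subseteq> F \<longrightarrow> trace_count F T = mirrored_trace_count F T"
    show "\<forall>\<Gamma>. \<Gamma> \<noteq> {} \<and> \<Gamma> \<subseteq> F \<longrightarrow>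
     (\<Sum>T | T \<subseteq> F \<and> \<Gamma> \<subseteq> T. trace_count F T) = (\<Sum>T | T \<subseteq> F \<and> \<Gamma> \<subseteq> T. mirrored_trace_count F T)"
    proof (intro allI impI sum.cong refl)
      fix \<Gamma> T assume "\<Gamma> \<noteq> {} \<and> \<Gamma> \<subseteq> F" "T \<in> {T. T \<subseteq> F \<and> \<Gamma> \<subseteq> T}"
      thus "trace_count F T = mirrored_trace_count F T"
        using pointwise by blast
    qed
  qed
  finally show ?thesis
    by (auto simp: mirrored_trace_count_def)
qed

lemma card_partition_eq_trace_count:
  assumes "\<Gamma>1 \<noteq> {}" "\<Gamma>1 \<inter> \<Gamma>2 = {}" "\<Gamma>1 \<union> \<Gamma>2 = F"
  shows "card (\<Inter>\<Gamma>1 - \<Union>\<Gamma>2) = trace_count F \<Gamma>1"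
proof -
  have "\<Inter>\<Gamma>1 - \<Union>\<Gamma>2 = {x\<in>\<Union>F. trace F x = \<Gamma>1}"
    using assms by (auto simp: trace_def)
  thus ?thesis by (simp add: trace_count_def)
qed

lemma complementary_condition_iff_trace_count_complement:
  "(\<forall>\<Gamma>1 \<Gamma>2. \<Gamma>1 \<noteq> {} \<and> \<Gamma>2 \<noteq> {} \<and> \<Gamma>1 \<subseteq> F \<and> \<Gamma>2 \<subseteq> F \<and> \<Gamma>1 \<inter> \<Gamma>2 = {} \<and> \<Gamma>1 \<union> \<Gamma>2 = F \<longrightarrow>
      card (\<Inter>\<Gamma>1 - \<Union>\<Gamma>2) = card (\<Inter>\<Gamma>2 - \<Union>\<Gamma>1))
   \<longleftrightarrow> (\<forall>T. T \<noteq> {} \<and> T \<subseteq> F \<and> T \<noteq> F \<longrightarrow> trace_count F T = trace_count F (F - T))"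
proof (intro iffI allI impI)
  fix T assume T: "T \<noteq> {} \<and> T \<subseteq> F \<and> T \<noteq> F"
  assume complementary: "\<forall>\<Gamma>1 \<Gamma>2. \<Gamma>1 \<noteq> {} \<and> \<Gamma>2 \<noteq> {} \<and> \<Gamma>1 \<subseteq> F \<and> \<Gamma>2 \<subseteq> F \<and> \<Gamma>1 \<inter> \<Gamma>2 = {}
      \<and> \<Gamma>1 \<union> \<Gamma>2 = F \<longrightarrow> card (\<Inter>\<Gamma>1 - \<Union>\<Gamma>2) = card (\<Inter>\<Gamma>2 - \<Union>\<Gamma>1)"
  have "trace_count F T = card (\<Inter>T - \<Union>(F - T))"
    by (rule card_partition_eq_trace_count[symmetric]) (use T in auto)
  also have "\<dots> = card (\<Inter>(F - T) - \<Union>T)"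
    by (rule complementary[rule_format]) (use T in auto)
  also have "\<dots> = trace_count F (F - T)"
    by (rule card_partition_eq_trace_count) (use T in auto)
  finally show "trace_count F T = trace_count F (F - T)" .
next
  fix \<Gamma>1 \<Gamma>2 :: "'a set set"
  assume sym: "\<forall>T. T \<noteq> {} \<and> T \<subseteq> F \<and> T \<noteq> F \<longrightarrow> trace_count F T = trace_count F (F - T)"
    and \<Gamma>: "\<Gamma>1 \<noteq> {} \<and> \<Gamma>2 \<noteq> {} \<and> \<Gamma>1 \<subseteq> F \<and> \<Gamma>2 \<subseteq> F \<and> \<Gamma>1 \<inter> \<Gamma>2 = {} \<and> \<Gamma>1 \<union> \<Gamma>2 = F"
  have "card (\<Inter>\<Gamma>1 - \<Union>\<Gamma>2) = trace_count F \<Gamma>1"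
    by (rule card_partition_eq_trace_count) (use \<Gamma> in auto)
  also have "\<dots> = trace_count F (F - \<Gamma>1)"
    by (rule sym[rule_format]) (use \<Gamma> in auto)
  also have "F - \<Gamma>1 = \<Gamma>2"
    using \<Gamma> by auto
  also have "trace_count F \<Gamma>2 = card (\<Inter>\<Gamma>2 - \<Union>\<Gamma>1)"
    by (rule card_partition_eq_trace_count[symmetric]) (use \<Gamma> in auto)
  finally show "card (\<Inter>\<Gamma>1 - \<Union>\<Gamma>2) = card (\<Inter>\<Gamma>2 - \<Union>\<Gamma>1)" .
qed

lemma disjoint_condition_if_trace_count_complement:
  assumes "set_system F"
    and sym: "\<forall>T. T \<noteq> {} \<and> T \<subseteq> F \<and> T \<noteq> F \<longrightarrow> trace_count F T = trace_count F (F - T)"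
  shows "\<forall>\<Gamma>1 \<Gamma>2. \<Gamma>1 \<noteq> {} \<and> \<Gamma>2 \<noteq> {} \<and> \<Gamma>1 \<subseteq> F \<and> \<Gamma>2 \<subseteq> F \<and> \<Gamma>1 \<inter> \<Gamma>2 = {} \<longrightarrow>
           card (\<Inter>\<Gamma>1 - \<Union>\<Gamma>2) = card (\<Inter>\<Gamma>2 - \<Union>\<Gamma>1)"
proof (intro allI impI, elim conjE)
  fix \<Gamma>1 \<Gamma>2 :: "'a set set"
  assume \<Gamma>: "\<Gamma>1 \<noteq> {}" "\<Gamma>2 \<noteq> {}" "\<Gamma>1 \<subseteq> F" "\<Gamma>2 \<subseteq> F" "\<Gamma>1 \<inter> \<Gamma>2 = {}"
  have fin: "finite F" "\<forall>S\<in>F. finite S"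
    using assms(1) by (auto simp: set_system_def)
  have "card (\<Inter>\<Gamma>1 - \<Union>\<Gamma>2) = (\<Sum>T | T \<subseteq> F \<and> \<Gamma>1 \<subseteq> T \<and> T \<inter> \<Gamma>2 = {}. trace_count F T)"
    using card_Inter_diff_Union[OF fin \<Gamma>(1,3,4)] .
  also have "\<dots> = (\<Sum>T | T \<subseteq> F \<and> \<Gamma>1 \<subseteq> T \<and> T \<inter> \<Gamma>2 = {}. trace_count F (F - T))"
  proof (rule sum.cong[OF refl])
    fix T assume "T \<in> {T. T \<subseteq> F \<and> \<Gamma>1 \<subseteq> T \<and> T \<inter> \<Gamma>2 = {}}"
    moreover from this have "T \<noteq> {}" "T \<noteq> F"
      using \<Gamma> by auto
    ultimately show "trace_count F T = trace_count F (F - T)"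
      using sym by blast
  qed
  also have "\<dots> = (\<Sum>T | T \<subseteq> F \<and> \<Gamma>2 \<subseteq> T \<and> T \<inter> \<Gamma>1 = {}. trace_count F T)"
    using sum_subfamilies_complement[OF fin(1) \<Gamma>(3,4)] .
  also have "\<dots> = card (\<Inter>\<Gamma>2 - \<Union>\<Gamma>1)"
    using card_Inter_diff_Union[OF fin \<Gamma>(2,4,3)] by simp
  finally show "card (\<Inter>\<Gamma>1 - \<Union>\<Gamma>2) = card (\<Inter>\<Gamma>2 - \<Union>\<Gamma>1)" .
qed

theorem theorem2p5:
  fixes F :: "'a set set"
  assumes "set_system F"
  shows "(HKE F \<longleftrightarrow>
           (\<forall>\<Gamma>1 \<Gamma>2. \<Gamma>1 \<noteq> {} \<and> \<Gamma>2 \<noteq> {} \<and> \<Gamma>1 \<subseteq> F \<and> \<Gamma>2 \<subseteq> F \<and> \<Gamma>1 \<inter> \<Gamma>2 = {} \<longrightarrow>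
              card (\<Inter>\<Gamma>1 - \<Union>\<Gamma>2) = card (\<Inter>\<Gamma>2 - \<Union>\<Gamma>1)))
       \<and> (HKE F \<longleftrightarrow>
           (\<forall>\<Gamma>1 \<Gamma>2. \<Gamma>1 \<noteq> {} \<and> \<Gamma>2 \<noteq> {} \<and> \<Gamma>1 \<subseteq> F \<and> \<Gamma>2 \<subseteq> F \<and> \<Gamma>1 \<inter> \<Gamma>2 = {}
              \<and> \<Gamma>1 \<union> \<Gamma>2 = F \<longrightarrow>
              card (\<Inter>\<Gamma>1 - \<Union>\<Gamma>2) = card (\<Inter>\<Gamma>2 - \<Union>\<Gamma>1)))"
    (is "(_ \<longleftrightarrow> ?disjoint) \<and> (_ \<longleftrightarrow> ?complementary)")
proof -
  have complementary: "HKE F \<longleftrightarrow> ?complementary"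
    by (rule trans[OF HKE_iff_trace_count_complement[OF assms]
          complementary_condition_iff_trace_count_complement[symmetric]])
  have disjoint_if_HKE: ?disjoint if "HKE F"
    by (rule disjoint_condition_if_trace_count_complement[OF assms
          HKE_iff_trace_count_complement[OF assms, THEN iffD1, OF that]])
  have complementary_if_disjoint: "?disjoint \<Longrightarrow> ?complementary"
    by blast
  show ?thesis
    using iffI[OF disjoint_if_HKE complementary[THEN iffD2, OF complementary_if_disjoint]] complementary
    by (rule conjI)
qed

end
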